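(* Let $U\in\mathcal C_n$ be a Clifford unitary with tableau $\begin{bmatrix}A&B\\C&D\end{bmatrix}$. Let $z\in\mathrm{supp}(U|0\rangle^{\otimes n})$ and let $r\in\{0,1\}^n$ be uniformly random. Then $rC\oplus z\in\mathrm{supp}(U|0\rangle^{\otimes n})$, and $rC\oplus z$ is a uniformly random element of $\mathrm{supp}(U|0\rangle^{\otimes n})$.
   Context: $\mathcal C_n$ is the $n$-qubit Clifford group (unitaries $U$ with $U\mathcal P_nU^\dagger=\mathcal P_n$, $\mathcal P_n$ the Pauli group). For $a\in\mathbb F_2^n$, $X^a=X^{a_1}\otimes\cdots\otimes X^{a_n}$ and similarly $Z^a$; $e_i$ is the $i$-th standard basis vector. The tableau of $U$ (ignoring signs) is the $2n\times 2n$ binary matrix $\begin{bmatrix}A&B\\C&D\end{bmatrix}$ with $A,B,C,D\in\mathbb F_2^{n\times n}$, where the $i$-th row of $A$ (resp. $B$) is the $X$-part (resp. $Z$-part) of the Pauli string $UX^{e_i}U^\dagger=\pm X^{a}Z^{b}$ (up to phase), and the $i$-th row of $C$ (resp. $D$) is the $X$-part (resp. $Z$-part) of $UZ^{e_i}U^\dagger$. For $|\psi\rangle=\sum_x\alpha_x|x\rangle$, $\mathrm{supp}(|\psi\rangle)=\{x:\alpha_x\ne0\}$. Here $rC$ is the row vector product over $\mathbb F_2$. *)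

theory Defs
  imports "Jordan_Normal_Form.Matrix" "HOL-Probability.Probability_Mass_Function"
begin

text \<open>Bit strings of length n are bool lists; the computational basis state |x> of n qubits
 corresponds to matrix index bits_to_nat x (first qubit = most significant bit).\<close>

definition bits :: "nat \<Rightarrow> bool list set" where
  "bits n = {xs. length xs = n}"

fun bits_to_nat :: "bool list \<Rightarrow> nat" where
  "bits_to_nat [] = 0"
| "bits_to_nat (b # bs) = (if b then 2 ^ length bs else 0) + bits_to_nat bs"

definition nat_to_bits :: "nat \<Rightarrow> nat \<Rightarrow> bool list" where
  "nat_to_bits n k = map (\<lambda>i. odd (k div 2 ^ (n - 1 - i))) [0..<n]"

definition bxor :: "bool list \<Rightarrow> bool list \<Rightarrow> bool list" where
  "bxor xs ys = map2 (\<noteq>) xs ys"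

definition bdot :: "bool list \<Rightarrow> bool list \<Rightarrow> bool" where
  "bdot xs ys = odd (length (filter id (map2 (\<and>) xs ys)))"

definition unit_bits :: "nat \<Rightarrow> nat \<Rightarrow> bool list" where
  "unit_bits n i = map (\<lambda>j. j = i) [0..<n]"

text \<open>The Pauli operator i^k X^a Z^b on n qubits:
  (X^a Z^b)|y> = (-1)^(b.y) |y xor a>.\<close>
definition pauli_mat :: "nat \<Rightarrow> nat \<Rightarrow> bool list \<Rightarrow> bool list \<Rightarrow> complex mat" where
  "pauli_mat n k a b = Matrix.mat (2^n) (2^n) (\<lambda>(i,j).
      if nat_to_bits n i = bxor (nat_to_bits n j) a
      then \<i> ^ k * (if bdot b (nat_to_bits n j) then -1 else 1) else 0)"

definition pauli_group :: "nat \<Rightarrow> complex mat set" where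
  "pauli_group n = {pauli_mat n k a b | k a b. a \<in> bits n \<and> b \<in> bits n}"

definition adj :: "complex mat \<Rightarrow> complex mat" where
  "adj U = Matrix.mat (dim_col U) (dim_row U) (\<lambda>(i,j). cnj (U $$ (j,i)))"

definition clifford :: "nat \<Rightarrow> complex mat \<Rightarrow> bool" where
  "clifford n U \<longleftrightarrow> U \<in> carrier_mat (2^n) (2^n) \<and> U * adj U = 1\<^sub>m (2^n)
     \<and> (\<lambda>P. U * P * adj U) ` pauli_group n = pauli_group n"

text \<open>C is the lower-left block of the tableau of U (ignoring signs): row i of C is the
 X-part of U Z^(e_i) U^dagger.\<close>
definition tableau_C :: "nat \<Rightarrow> complex mat \<Rightarrow> (nat \<Rightarrow> bool list) \<Rightarrow> bool" where
  "tableau_C n U C \<longleftrightarrow> (\<forall>i<n. C i \<in> bits n \<and>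
     (\<exists>k b. U * pauli_mat n 0 (replicate n False) (unit_bits n i) * adj U = pauli_mat n k (C i) b))"

definition row_mul :: "nat \<Rightarrow> bool list \<Rightarrow> (nat \<Rightarrow> bool list) \<Rightarrow> bool list" where
  "row_mul n r C = foldr bxor [C i. i \<leftarrow> [0..<n], r ! i] (replicate n False)"

definition supp0 :: "nat \<Rightarrow> complex mat \<Rightarrow> bool list set" where
  "supp0 n U = {x \<in> bits n. U $$ (bits_to_nat x, 0) \<noteq> 0}"

end

(*
  Write V = adj U. For r in F_2^n the diagonal Pauli Z^r is the product of the Z^(e_i) with
  r_i = 1, so U Z^r V is a product of Pauli matrices whose X-parts are the rows C i; such a
  matrix sends every basis state |x> to a multiple of |x xor rC>. Since Z^r fixes |0...0>,
  the state U|0...0> is fixed by U Z^r V, so z in the support forces z xor rC into the support.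
  Conversely, averaging the characters gives sum_r Z^r = 2^n |0><0|, hence
  sum_r (U Z^r V)_(y,z) = 2^n U_(y,0) conj(U_(z,0)), which is nonzero for y, z in the support;
  so some U Z^r V connects z to y, i.e. y = z xor rC. Finally r |-> rC xor z is affine over F_2,
  so all its fibres have the same size and it pushes the uniform distribution on F_2^n forward
  to the uniform distribution on its image, the support.
*)
theory Submission
  imports Defs "Jordan_Normal_Form.Determinant"
begin

lemma length_nat_to_bits [simp]: "length (nat_to_bits n k) = n"
  by (simp add: nat_to_bits_def)

lemma nth_nat_to_bits: "i < n \<Longrightarrow> nat_to_bits n k ! i = odd (k div 2 ^ (n - 1 - i))"
  by (simp add: nat_to_bits_def del: upt_Suc)

lemma nat_to_bits_Suc: "nat_to_bits (Suc n) k = odd (k div 2 ^ n) # nat_to_bits n (k mod 2 ^ n)"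
proof (rule nth_equalityI)
  fix i assume "i < length (nat_to_bits (Suc n) k)"
  moreover have "j < n \<Longrightarrow> odd (k mod 2 ^ n div 2 ^ j) = odd (k div 2 ^ j)" for j
    by (metis bit_iff_odd bit_take_bit_iff take_bit_eq_mod)
  ultimately show "nat_to_bits (Suc n) k ! i = (odd (k div 2 ^ n) # nat_to_bits n (k mod 2 ^ n)) ! i"
    by (cases i) (auto simp: nth_nat_to_bits)
qed simp

lemma bits_to_nat_nat_to_bits: "bits_to_nat (nat_to_bits n k) = k mod 2 ^ n"
proof (induction n arbitrary: k)
  case (Suc n)
  have "k mod 2 ^ Suc n = 2 ^ n * (k div 2 ^ n mod 2) + k mod 2 ^ n"
    by (metis mod_mult2_eq mult.commute power_Suc)
  then show ?case
    by (simp add: nat_to_bits_Suc Suc.IH odd_iff_mod_2_eq_one even_iff_mod_2_eq_zero)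
qed (simp add: nat_to_bits_def)

lemma bits_to_nat_less: "bits_to_nat x < 2 ^ length x"
  by (induction x) auto

lemma nat_to_bits_bits_to_nat: "nat_to_bits (length x) (bits_to_nat x) = x"
proof (induction x)
  case (Cons b x)
  then show ?case
    using bits_to_nat_less[of x] by (simp add: nat_to_bits_Suc)
qed (simp add: nat_to_bits_def)

lemma nat_to_bits_eq_iff:
  assumes "i < 2 ^ n" and "x \<in> bits n"
  shows "nat_to_bits n i = x \<longleftrightarrow> i = bits_to_nat x"
  using assms bits_to_nat_nat_to_bits[of n i] nat_to_bits_bits_to_nat[of x]
  by (auto simp: bits_def)

lemma bits_to_nat_less_bits: "x \<in> bits n \<Longrightarrow> bits_to_nat x < 2 ^ n"
  using bits_to_nat_less[of x] by (simp add: bits_def)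

lemma nat_to_bits_bits_to_nat_bits: "x \<in> bits n \<Longrightarrow> nat_to_bits n (bits_to_nat x) = x"
  using nat_to_bits_bits_to_nat[of x] by (simp add: bits_def)

lemma nat_to_bits_inj: "i < 2 ^ n \<Longrightarrow> j < 2 ^ n \<Longrightarrow> nat_to_bits n i = nat_to_bits n j \<Longrightarrow> i = j"
  by (metis bits_to_nat_nat_to_bits mod_less)

lemma bits_to_nat_zeros [simp]: "bits_to_nat (replicate n False) = 0"
  by (induction n) auto

lemma nat_to_bits_eq_zeros_iff: "l < 2 ^ n \<Longrightarrow> nat_to_bits n l = replicate n False \<longleftrightarrow> l = 0"
  using nat_to_bits_eq_iff[of l n "replicate n False"] by (simp add: bits_def)

section \<open>Linear algebra over \<open>F\<^sub>2\<close> on bit strings\<close>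

lemma length_bxor [simp]: "length (bxor a b) = min (length a) (length b)"
  by (simp add: bxor_def)

lemma nth_bxor [simp]: "i < length a \<Longrightarrow> i < length b \<Longrightarrow> bxor a b ! i = (a ! i \<noteq> b ! i)"
  by (simp add: bxor_def)

lemma bxor_comm: "length a = length b \<Longrightarrow> bxor a b = bxor b a"
  by (rule nth_equalityI) auto

lemma bxor_assoc: "length a = length b \<Longrightarrow> length b = length c \<Longrightarrow>
    bxor (bxor a b) c = bxor a (bxor b c)"
  by (rule nth_equalityI) auto

lemma bxor_zeros_right [simp]: "length a = n \<Longrightarrow> bxor a (replicate n False) = a"
  by (rule nth_equalityI) auto

lemma bxor_zeros_left [simp]: "length a = n \<Longrightarrow> bxor (replicate n False) a = a"
  by (rule nth_equalityI) auto

lemma bxor_cancel_right [simp]: "length a = length b \<Longrightarrow> bxor (bxor a b) b = a"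
  by (rule nth_equalityI) auto

lemma bxor_cancel_left [simp]: "length a = length b \<Longrightarrow> bxor a (bxor a b) = b"
  by (rule nth_equalityI) auto

lemma bxor_in_bits: "a \<in> bits n \<Longrightarrow> b \<in> bits n \<Longrightarrow> bxor a b \<in> bits n"
  by (simp add: bits_def)

lemma bdot_Cons [simp]: "bdot (p # a) (q # x) = ((p \<and> q) \<noteq> bdot a x)"
  by (cases p; cases q) (simp_all add: bdot_def)

lemma bdot_Nil [simp]: "bdot [] x = False" "bdot a [] = False"
  by (simp_all add: bdot_def)

lemma bdot_zeros_left [simp]: "bdot (replicate n False) x = False"
proof (induction n arbitrary: x)
  case (Suc n)
  then show ?case
    by (cases x) auto
qed simp

lemma bdot_zeros_right [simp]: "bdot r (replicate n False) = False"
proof (induction n arbitrary: r)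
  case (Suc n)
  then show ?case
    by (cases r) auto
qed simp

lemma bdot_bxor_left:
  "length a = length x \<Longrightarrow> length b = length x \<Longrightarrow> bdot (bxor a b) x = (bdot a x \<noteq> bdot b x)"
proof (induction x arbitrary: a b)
  case (Cons q x)
  then obtain p a' p' b' where "a = p # a'" "b = p' # b'"
    by (metis length_Suc_conv)
  with Cons show ?case
    by (auto simp: bxor_def)
qed simp

definition xor_sum :: "nat \<Rightarrow> bool list list \<Rightarrow> bool list" where
  "xor_sum n xs = foldr bxor xs (replicate n False)"

lemma xor_sum_Nil [simp]: "xor_sum n [] = replicate n False"
  by (simp add: xor_sum_def)

lemma xor_sum_Cons [simp]: "xor_sum n (x # xs) = bxor x (xor_sum n xs)"
  by (simp add: xor_sum_def)

lemma length_xor_sum: "\<forall>x\<in>set xs. length x = n \<Longrightarrow> length (xor_sum n xs) = n"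
  by (induction xs) auto

lemma xor_sum_filter_neq:
  assumes "\<forall>x\<in>set xs. length (f x) = n"
  shows "xor_sum n (map f (filter (\<lambda>x. P x \<noteq> Q x) xs))
    = bxor (xor_sum n (map f (filter P xs))) (xor_sum n (map f (filter Q xs)))"
  using assms
proof (induction xs)
  case (Cons x xs)
  then have "\<forall>y\<in>set ys. length y = n \<Longrightarrow> length (xor_sum n ys) = n" for ys
    by (simp add: length_xor_sum)
  with Cons show ?case
    by (auto intro!: nth_equalityI simp: length_xor_sum)
qed simp

lemma xor_sum_unit_bits:
  assumes "distinct is" and "\<forall>i\<in>set is. i < n"
  shows "xor_sum n (map (unit_bits n) is) = map (\<lambda>j. j \<in> set is) [0..<n]"
  using assms by (induction "is") (auto intro!: nth_equalityI simp: unit_bits_def)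

lemma bits_eq_xor_sum_unit_bits:
  "r \<in> bits n \<Longrightarrow> r = xor_sum n (map (unit_bits n) (filter ((!) r) [0..<n]))"
  by (subst xor_sum_unit_bits) (auto intro!: nth_equalityI simp: bits_def)

lemma row_mul_eq_xor_sum: "row_mul n r C = xor_sum n (map C (filter ((!) r) [0..<n]))"
proof -
  have "[C i. i \<leftarrow> xs, r ! i] = map C (filter ((!) r) xs)" for xs
    by (induction xs) auto
  then show ?thesis
    by (simp add: row_mul_def xor_sum_def)
qed

lemma row_mul_in_bits: "\<forall>i<n. C i \<in> bits n \<Longrightarrow> row_mul n r C \<in> bits n"
  by (simp add: row_mul_eq_xor_sum length_xor_sum bits_def)

lemma row_mul_bxor:
  assumes "\<forall>i<n. C i \<in> bits n" and "r \<in> bits n" and "s \<in> bits n"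
  shows "row_mul n (bxor r s) C = bxor (row_mul n r C) (row_mul n s C)"
proof -
  have "filter ((!) (bxor r s)) [0..<n] = filter (\<lambda>i. r ! i \<noteq> s ! i) [0..<n]"
    using assms(2,3) by (intro filter_cong) (auto simp: bits_def)
  then show ?thesis
    unfolding row_mul_eq_xor_sum
    using xor_sum_filter_neq[of "[0..<n]" C n "(!) r" "(!) s"] assms(1) by (simp add: bits_def)
qed

lemma finite_bits [simp]: "finite (bits n)"
  using finite_lists_length_eq[of "UNIV :: bool set" n] by (simp add: bits_def)

lemma card_bits [simp]: "card (bits n) = 2 ^ n"
  using card_lists_length_eq[of "UNIV :: bool set" n] by (simp add: bits_def)

lemma bits_nonempty [simp]: "bits n \<noteq> {}"
  using card_bits[of n] by (metis card.empty power_not_zero zero_neq_numeral)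

lemma sum_bits_Suc:
  "(\<Sum>r\<in>bits (Suc n). f r) = (\<Sum>r\<in>bits n. f (True # r)) + (\<Sum>r\<in>bits n. f (False # r))"
proof -
  have "bits (Suc n) = Cons True ` bits n \<union> Cons False ` bits n"
    by (auto simp: bits_def length_Suc_conv)
  then have "(\<Sum>r\<in>bits (Suc n). f r) = (\<Sum>r\<in>Cons True ` bits n. f r) + (\<Sum>r\<in>Cons False ` bits n. f r)"
    by (simp only:) (rule sum.union_disjoint; auto)
  then show ?thesis
    by (simp add: sum.reindex)
qed

lemma sum_bits_sign:
  "length x = n \<Longrightarrow>
    (\<Sum>r\<in>bits n. if bdot r x then -1 else 1 :: complex) = (if x = replicate n False then 2 ^ n else 0)"
proof (induction x arbitrary: n)
  case Nil
  then have "bits n = {[]}"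
    by (auto simp: bits_def)
  with Nil show ?case
    by simp
next
  case (Cons b x)
  then obtain m where m: "n = Suc m" "length x = m"
    by auto
  show ?case
  proof (cases b)
    case True
    have "(\<Sum>r\<in>bits m. if \<not> bdot r x then -1 else 1 :: complex) + (\<Sum>r\<in>bits m. if bdot r x then -1 else 1) = 0"
      by (auto simp: sum.distrib[symmetric] intro!: sum.neutral)
    then show ?thesis
      using True m by (simp add: sum_bits_Suc)
  next
    case False
    then show ?thesis
      using m Cons.IH[OF m(2)] by (simp add: sum_bits_Suc)
  qed
qed

section \<open>Matrices that shift the computational basis\<close>

lemma mult_mat_index_nonzeroD:
  fixes A B :: "'a::semiring_0 mat"
  assumes "A \<in> carrier_mat N K" "B \<in> carrier_mat K m" "i < N" "j < m" "(A * B) $$ (i, j) \<noteq> 0"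
  obtains l where "l < K" "A $$ (i, l) \<noteq> 0" "B $$ (l, j) \<noteq> 0"
proof -
  have "(\<Sum>l\<in>{0..<K}. A $$ (i, l) * B $$ (l, j)) \<noteq> 0"
    using assms by (simp add: scalar_prod_def)
  then obtain l where "l < K" "A $$ (i, l) * B $$ (l, j) \<noteq> 0"
    by (metis (no_types, lifting) atLeastLessThan_iff sum.neutral)
  then show ?thesis
    using that mult_not_zero by blast
qed

definition shifts_by :: "nat \<Rightarrow> bool list \<Rightarrow> complex mat \<Rightarrow> bool" where
  "shifts_by n a M \<longleftrightarrow>
    (\<forall>i<2 ^ n. \<forall>j<2 ^ n. M $$ (i, j) \<noteq> 0 \<longrightarrow> nat_to_bits n i = bxor (nat_to_bits n j) a)"

lemma shifts_byD:
  "shifts_by n a M \<Longrightarrow> i < 2 ^ n \<Longrightarrow> j < 2 ^ n \<Longrightarrow> M $$ (i, j) \<noteq> 0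
    \<Longrightarrow> nat_to_bits n i = bxor (nat_to_bits n j) a"
  by (simp add: shifts_by_def)

lemma pauli_mat_shifts_by: "shifts_by n a (pauli_mat n k a b)"
  by (auto simp: shifts_by_def pauli_mat_def split: if_splits)

lemma one_mat_shifts_by: "shifts_by n (replicate n False) (1\<^sub>m (2 ^ n))"
  by (auto simp: shifts_by_def split: if_splits)

lemma shifts_by_mult:
  assumes "A \<in> carrier_mat (2 ^ n) (2 ^ n)" "B \<in> carrier_mat (2 ^ n) (2 ^ n)"
    and "shifts_by n a A" "shifts_by n b B" "a \<in> bits n" "b \<in> bits n"
  shows "shifts_by n (bxor a b) (A * B)"
  unfolding shifts_by_def
proof (intro allI impI)
  fix i j assume ij: "i < 2 ^ n" "j < 2 ^ n" and "(A * B) $$ (i, j) \<noteq> 0"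
  then obtain l where l: "l < 2 ^ n" "A $$ (i, l) \<noteq> 0" "B $$ (l, j) \<noteq> 0"
    by (rule mult_mat_index_nonzeroD[OF assms(1,2)])
  have "nat_to_bits n i = bxor (nat_to_bits n l) a" "nat_to_bits n l = bxor (nat_to_bits n j) b"
    using shifts_byD[OF assms(3) ij(1) l(1,2)] shifts_byD[OF assms(4) l(1) ij(2) l(3)] by simp_all
  then show "nat_to_bits n i = bxor (nat_to_bits n j) (bxor a b)"
    using assms(5,6) by (simp add: bits_def bxor_assoc bxor_comm[of a b])
qed

lemma shifts_by_mult_nonzero:
  assumes "shifts_by n a M" "M \<in> carrier_mat (2 ^ n) (2 ^ n)" "W \<in> carrier_mat (2 ^ n) m" "a \<in> bits n"
    and "i < 2 ^ n" "k < m" "(M * W) $$ (i, k) \<noteq> 0"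
  shows "W $$ (bits_to_nat (bxor (nat_to_bits n i) a), k) \<noteq> 0"
proof -
  obtain l where l: "l < 2 ^ n" "M $$ (i, l) \<noteq> 0" "W $$ (l, k) \<noteq> 0"
    by (rule mult_mat_index_nonzeroD[OF assms(2,3,5-7)])
  have "nat_to_bits n i = bxor (nat_to_bits n l) a"
    by (rule shifts_byD[OF assms(1,5) l(1,2)])
  then have "nat_to_bits n l = bxor (nat_to_bits n i) a"
    using assms(4) by (simp add: bits_def)
  then have "l = bits_to_nat (bxor (nat_to_bits n i) a)"
    using l(1) assms(4) by (simp add: nat_to_bits_eq_iff bits_def)
  then show ?thesis
    using l(3) by simp
qed

definition Z_sign :: "nat \<Rightarrow> bool list \<Rightarrow> nat \<Rightarrow> complex" where
  "Z_sign n r j = (if bdot r (nat_to_bits n j) then -1 else 1)"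

definition Z_mat :: "nat \<Rightarrow> bool list \<Rightarrow> complex mat" where
  "Z_mat n r = Matrix.mat (2 ^ n) (2 ^ n) (\<lambda>(i, j). if i = j then Z_sign n r j else 0)"

lemma Z_mat_carrier [simp]: "Z_mat n r \<in> carrier_mat (2 ^ n) (2 ^ n)"
  by (simp add: Z_mat_def)

lemma dim_Z_mat [simp]: "dim_row (Z_mat n r) = 2 ^ n" "dim_col (Z_mat n r) = 2 ^ n"
  by (simp_all add: Z_mat_def)

lemma index_Z_mat: "i < 2 ^ n \<Longrightarrow> j < 2 ^ n \<Longrightarrow> Z_mat n r $$ (i, j) = (if i = j then Z_sign n r j else 0)"
  by (simp add: Z_mat_def)

lemma Z_sign_0 [simp]: "Z_sign n r 0 = 1"
  using nat_to_bits_eq_zeros_iff[of 0 n] by (simp add: Z_sign_def)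

lemma sum_Z_sign: "l < 2 ^ n \<Longrightarrow> (\<Sum>r\<in>bits n. Z_sign n r l) = (if l = 0 then 2 ^ n else 0)"
  by (simp add: Z_sign_def sum_bits_sign nat_to_bits_eq_zeros_iff)

lemma pauli_mat_eq_Z_mat: "r \<in> bits n \<Longrightarrow> pauli_mat n 0 (replicate n False) r = Z_mat n r"
  by (rule eq_matI) (auto simp: index_Z_mat Z_sign_def pauli_mat_def dest: nat_to_bits_inj)

lemma index_mult_Z_mat:
  assumes "M \<in> carrier_mat m (2 ^ n)" "i < m" "j < 2 ^ n"
  shows "(M * Z_mat n r) $$ (i, j) = M $$ (i, j) * Z_sign n r j"
proof -
  have "(M * Z_mat n r) $$ (i, j) = (\<Sum>l\<in>{0..<2 ^ n}. M $$ (i, l) * (if l = j then Z_sign n r j else 0))"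
    using assms by (simp add: scalar_prod_def index_Z_mat)
  also have "\<dots> = (\<Sum>l\<in>{0..<2 ^ n}. if l = j then M $$ (i, l) * Z_sign n r j else 0)"
    by (rule sum.cong) auto
  finally show ?thesis
    using assms(3) by simp
qed

lemma Z_mat_mult:
  assumes "r \<in> bits n" "s \<in> bits n"
  shows "Z_mat n r * Z_mat n s = Z_mat n (bxor r s)"
proof (rule eq_matI)
  fix i j assume "i < dim_row (Z_mat n (bxor r s))" "j < dim_col (Z_mat n (bxor r s))"
  then show "(Z_mat n r * Z_mat n s) $$ (i, j) = Z_mat n (bxor r s) $$ (i, j)"
    using assms
    by (simp add: index_mult_Z_mat[OF Z_mat_carrier] index_Z_mat Z_sign_def bdot_bxor_left bits_def
        del: index_mult_mat)
qed simp_all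

lemma Z_mat_zeros: "Z_mat n (replicate n False) = 1\<^sub>m (2 ^ n)"
  by (rule eq_matI) (auto simp: index_Z_mat Z_sign_def)

lemma conj_mult_mat:
  fixes A B U V :: "'a::semiring_1 mat"
  assumes "A \<in> carrier_mat N N" "B \<in> carrier_mat N N" "U \<in> carrier_mat N N" "V \<in> carrier_mat N N"
    and "V * U = 1\<^sub>m N"
  shows "U * (A * B) * V = (U * A * V) * (U * B * V)"
proof -
  have "V * (U * (B * V)) = (V * U) * (B * V)"
    using assms by (intro assoc_mult_mat[symmetric]) auto
  then have "V * (U * (B * V)) = B * V"
    using assms by simp
  then show ?thesis
    using assms(1-4) by (simp add: assoc_mult_mat[of _ N N _ N _ N])
qed

lemma conj_Z_mat_xor_sum_shifts_by:
  assumes U: "U \<in> carrier_mat (2 ^ n) (2 ^ n)" and V: "V \<in> carrier_mat (2 ^ n) (2 ^ n)"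
    and "U * V = 1\<^sub>m (2 ^ n)" "V * U = 1\<^sub>m (2 ^ n)"
    and "\<forall>i\<in>set is. i < n \<and> C i \<in> bits n \<and> shifts_by n (C i) (U * Z_mat n (unit_bits n i) * V)"
  shows "shifts_by n (xor_sum n (map C is)) (U * Z_mat n (xor_sum n (map (unit_bits n) is)) * V)"
  using assms(5)
proof (induction "is")
  case Nil
  then show ?case
    using assms(3) U by (simp add: Z_mat_zeros one_mat_shifts_by)
next
  case (Cons i "is")
  have in_bits: "unit_bits n i \<in> bits n" "xor_sum n (map (unit_bits n) is) \<in> bits n"
    "xor_sum n (map C is) \<in> bits n"
    using Cons.prems by (auto simp: bits_def unit_bits_def length_xor_sum)
  have "Z_mat n (xor_sum n (map (unit_bits n) (i # is)))
      = Z_mat n (unit_bits n i) * Z_mat n (xor_sum n (map (unit_bits n) is))"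
    using in_bits by (simp add: Z_mat_mult)
  then have "U * Z_mat n (xor_sum n (map (unit_bits n) (i # is))) * V
      = (U * Z_mat n (unit_bits n i) * V) * (U * Z_mat n (xor_sum n (map (unit_bits n) is)) * V)"
    using conj_mult_mat[OF Z_mat_carrier Z_mat_carrier U V assms(4)] by simp
  moreover have "shifts_by n (bxor (C i) (xor_sum n (map C is)))
      ((U * Z_mat n (unit_bits n i) * V) * (U * Z_mat n (xor_sum n (map (unit_bits n) is)) * V))"
    using Cons U V in_bits by (intro shifts_by_mult) auto
  ultimately show ?case
    by simp
qed

lemma index_conj_Z_mat:
  assumes U: "U \<in> carrier_mat (2 ^ n) (2 ^ n)" and V: "V \<in> carrier_mat (2 ^ n) (2 ^ n)"
    and "y < 2 ^ n" "z < 2 ^ n"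
  shows "(U * Z_mat n r * V) $$ (y, z) = (\<Sum>l\<in>{0..<2 ^ n}. U $$ (y, l) * V $$ (l, z) * Z_sign n r l)"
proof -
  define M where "M = U * Z_mat n r"
  have "(M * V) $$ (y, z) = (\<Sum>l\<in>{0..<2 ^ n}. M $$ (y, l) * V $$ (l, z))"
    using assms by (simp add: M_def scalar_prod_def)
  also have "\<dots> = (\<Sum>l\<in>{0..<2 ^ n}. U $$ (y, l) * V $$ (l, z) * Z_sign n r l)"
    using assms(3) by (intro sum.cong) (simp_all add: M_def index_mult_Z_mat[OF U] del: index_mult_mat)
  finally show ?thesis
    by (simp add: M_def)
qed

lemma sum_conj_Z_mat:
  assumes U: "U \<in> carrier_mat (2 ^ n) (2 ^ n)" and V: "V \<in> carrier_mat (2 ^ n) (2 ^ n)"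
    and "y < 2 ^ n" "z < 2 ^ n"
  shows "(\<Sum>r\<in>bits n. (U * Z_mat n r * V) $$ (y, z)) = 2 ^ n * U $$ (y, 0) * V $$ (0, z)"
proof -
  have "(\<Sum>r\<in>bits n. (U * Z_mat n r * V) $$ (y, z))
      = (\<Sum>l\<in>{0..<2 ^ n}. U $$ (y, l) * V $$ (l, z) * (\<Sum>r\<in>bits n. Z_sign n r l))"
    by (simp add: index_conj_Z_mat[OF assms] sum.swap[of _ "bits n"] sum_distrib_left)
  also have "\<dots> = (\<Sum>l\<in>{0..<2 ^ n}. if l = 0 then 2 ^ n * U $$ (y, l) * V $$ (l, z) else 0)"
    by (rule sum.cong) (auto simp: sum_Z_sign)
  finally show ?thesis
    by simp
qed

lemma dim_adj [simp]: "dim_row (adj U) = dim_col U" "dim_col (adj U) = dim_row U"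
  by (simp_all add: adj_def)

lemma clifford_adj:
  assumes "clifford n U"
  shows "U \<in> carrier_mat (2 ^ n) (2 ^ n)" "adj U \<in> carrier_mat (2 ^ n) (2 ^ n)"
    "U * adj U = 1\<^sub>m (2 ^ n)" "adj U * U = 1\<^sub>m (2 ^ n)"
proof -
  show U: "U \<in> carrier_mat (2 ^ n) (2 ^ n)" and UV: "U * adj U = 1\<^sub>m (2 ^ n)"
    using assms unfolding clifford_def by blast+
  show V: "adj U \<in> carrier_mat (2 ^ n) (2 ^ n)"
    using U by (intro carrier_matI) auto
  show "adj U * U = 1\<^sub>m (2 ^ n)"
    by (rule mat_mult_left_right_inverse[OF U V UV])
qed

lemma index_adj: "U \<in> carrier_mat N N \<Longrightarrow> i < N \<Longrightarrow> j < N \<Longrightarrow> adj U $$ (i, j) = cnj (U $$ (j, i))"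
  by (simp add: adj_def)

lemma tableau_C_conj_shifts_by:
  assumes "tableau_C n U C" "i < n"
  shows "C i \<in> bits n" "shifts_by n (C i) (U * Z_mat n (unit_bits n i) * adj U)"
proof -
  obtain k b where "C i \<in> bits n"
    and "U * pauli_mat n 0 (replicate n False) (unit_bits n i) * adj U = pauli_mat n k (C i) b"
    using assms unfolding tableau_C_def by blast
  moreover have "unit_bits n i \<in> bits n"
    by (simp add: unit_bits_def bits_def)
  ultimately show "C i \<in> bits n" "shifts_by n (C i) (U * Z_mat n (unit_bits n i) * adj U)"
    by (simp_all add: pauli_mat_eq_Z_mat[symmetric] pauli_mat_shifts_by)
qed

lemma clifford_conj_Z_mat_shifts_by:
  assumes "clifford n U" "tableau_C n U C" "r \<in> bits n"
  shows "shifts_by n (row_mul n r C) (U * Z_mat n r * adj U)"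
proof -
  have "shifts_by n (xor_sum n (map C (filter ((!) r) [0..<n])))
      (U * Z_mat n (xor_sum n (map (unit_bits n) (filter ((!) r) [0..<n]))) * adj U)"
    using tableau_C_conj_shifts_by[OF assms(2)] clifford_adj[OF assms(1)]
    by (intro conj_Z_mat_xor_sum_shifts_by) auto
  moreover have "Z_mat n r = Z_mat n (xor_sum n (map (unit_bits n) (filter ((!) r) [0..<n])))"
    by (rule arg_cong[OF bits_eq_xor_sum_unit_bits[OF assms(3)]])
  ultimately show ?thesis
    unfolding row_mul_eq_xor_sum by simp
qed

section \<open>The support of a stabilizer state\<close>

lemma supp0_translate:
  assumes "clifford n U" "tableau_C n U C" "z \<in> supp0 n U" "r \<in> bits n"
  shows "bxor (row_mul n r C) z \<in> supp0 n U"
proof -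
  note U = clifford_adj[OF assms(1)]
  define M where "M = U * Z_mat n r * adj U"
  define a where "a = row_mul n r C"
  have z: "z \<in> bits n" "bits_to_nat z < 2 ^ n" "U $$ (bits_to_nat z, 0) \<noteq> 0"
    using assms(3) by (auto simp: supp0_def bits_to_nat_less_bits)
  have a: "a \<in> bits n"
    using tableau_C_conj_shifts_by(1)[OF assms(2)] by (simp add: a_def row_mul_in_bits)
  have M: "M \<in> carrier_mat (2 ^ n) (2 ^ n)"
    unfolding M_def using mult_carrier_mat[OF mult_carrier_mat[OF U(1) Z_mat_carrier] U(2)] .
  have "M * U = U * Z_mat n r * (adj U * U)"
    unfolding M_def by (rule assoc_mult_mat[OF mult_carrier_mat[OF U(1) Z_mat_carrier] U(2) U(1)])
  then have "M * U = U * Z_mat n r"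
    using U by simp
  \<comment> \<open>\<open>Z\<^sup>r\<close> fixes \<open>|0\<dots>0>\<close>, so \<open>U|0\<dots>0>\<close> is also the image of itself under \<open>M\<close>\<close>
  then have "(M * U) $$ (bits_to_nat z, 0) = U $$ (bits_to_nat z, 0)"
    using U z(2) by (simp add: index_mult_Z_mat del: index_mult_mat)
  then have "U $$ (bits_to_nat (bxor (nat_to_bits n (bits_to_nat z)) a), 0) \<noteq> 0"
    using z(2,3) by (intro shifts_by_mult_nonzero[OF _ M U(1) a])
      (simp_all add: M_def a_def clifford_conj_Z_mat_shifts_by[OF assms(1,2,4)])
  then show ?thesis
    using z(1) a by (simp add: supp0_def nat_to_bits_bits_to_nat_bits bxor_in_bits bxor_comm[of z] bits_def a_def)
qed

lemma supp0_subset_translates: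
  assumes "clifford n U" "tableau_C n U C" "z \<in> supp0 n U" "y \<in> supp0 n U"
  shows "\<exists>r\<in>bits n. y = bxor (row_mul n r C) z"
proof -
  note U = clifford_adj[OF assms(1)]
  have z: "z \<in> bits n" "bits_to_nat z < 2 ^ n" "U $$ (bits_to_nat z, 0) \<noteq> 0"
    and y: "y \<in> bits n" "bits_to_nat y < 2 ^ n" "U $$ (bits_to_nat y, 0) \<noteq> 0"
    using assms(3,4) by (auto simp: supp0_def bits_to_nat_less_bits)
  have "(\<Sum>r\<in>bits n. (U * Z_mat n r * adj U) $$ (bits_to_nat y, bits_to_nat z))
      = 2 ^ n * U $$ (bits_to_nat y, 0) * adj U $$ (0, bits_to_nat z)"
    by (rule sum_conj_Z_mat[OF U(1,2) y(2) z(2)])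
  also have "\<dots> = 2 ^ n * U $$ (bits_to_nat y, 0) * cnj (U $$ (bits_to_nat z, 0))"
    using index_adj[OF U(1) _ z(2), of 0] by simp
  also have "\<dots> \<noteq> 0"
    using y(3) z(3) by simp
  finally obtain r where r: "r \<in> bits n"
    and nonzero: "(U * Z_mat n r * adj U) $$ (bits_to_nat y, bits_to_nat z) \<noteq> 0"
    by (metis (no_types, lifting) sum.neutral)
  have "nat_to_bits n (bits_to_nat y) = bxor (nat_to_bits n (bits_to_nat z)) (row_mul n r C)"
    by (rule shifts_byD[OF clifford_conj_Z_mat_shifts_by[OF assms(1,2) r] y(2) z(2) nonzero])
  moreover have "row_mul n r C \<in> bits n"
    using tableau_C_conj_shifts_by(1)[OF assms(2)] by (simp add: row_mul_in_bits)
  ultimately have "y = bxor (row_mul n r C) z"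
    using y(1) z(1) by (simp add: nat_to_bits_bits_to_nat_bits bxor_comm bits_def)
  with r show ?thesis
    by blast
qed

section \<open>Uniform distributions\<close>

lemma map_pmf_of_set_equal_fibres:
  assumes "finite A" "A \<noteq> {}"
    and "\<And>x y. x \<in> A \<Longrightarrow> y \<in> A \<Longrightarrow> card {x' \<in> A. f x' = f x} = card {y' \<in> A. f y' = f y}"
  shows "map_pmf f (pmf_of_set A) = pmf_of_set (f ` A)"
proof (rule pmf_eqI)
  fix y
  obtain x0 where x0: "x0 \<in> A"
    using assms(2) by blast
  define k where "k = card {x \<in> A. f x = f x0}"
  have fibre: "card {x \<in> A. f x = y'} = k" if "y' \<in> f ` A" for y'
    using that assms(3)[OF _ x0] by (auto simp: k_def)
  have "card A = (\<Sum>y'\<in>f ` A. card {x \<in> A. f x = y'})"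
    using sum.image_gen[OF assms(1), of "\<lambda>_. 1 :: nat" f] by simp
  also have "\<dots> = card (f ` A) * k"
    by (simp add: fibre)
  finally have card_A: "card A = card (f ` A) * k" .
  moreover have "card A > 0"
    using assms(1,2) by (simp add: card_gt_0_iff)
  ultimately have "k > 0"
    by simp
  have "pmf (map_pmf f (pmf_of_set A)) y = card {x \<in> A. f x = y} / card A"
    using assms(1,2) by (simp add: pmf_map measure_pmf_of_set Int_def vimage_def conj_commute)
  also have "\<dots> = pmf (pmf_of_set (f ` A)) y"
  proof (cases "y \<in> f ` A")
    case True
    then show ?thesis
      using assms(1,2) \<open>k > 0\<close> by (simp add: fibre card_A)
  next
    case False
    then have "{x \<in> A. f x = y} = {}"
      by blast
    with False show ?thesis
      using assms(1,2) by simp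
  qed
  finally show "pmf (map_pmf f (pmf_of_set A)) y = pmf (pmf_of_set (f ` A)) y" .
qed

lemma card_fibres_translation_invariant:
  assumes "\<And>r t. r \<in> bits n \<Longrightarrow> t \<in> bits n \<Longrightarrow> f (bxor r t) = g (f r) t"
    and "r0 \<in> bits n" "r1 \<in> bits n"
  shows "card {r \<in> bits n. f r = f r0} = card {r \<in> bits n. f r = f r1}"
proof -
  have le: "card {r \<in> bits n. f r = f a} \<le> card {r \<in> bits n. f r = f b}"
    if a: "a \<in> bits n" and b: "b \<in> bits n" for a b
  proof (rule card_inj_on_le)
    define t where "t = bxor a b"
    have t: "t \<in> bits n"
      using a b by (simp add: t_def bxor_in_bits)
    show "inj_on (\<lambda>r. bxor r t) {r \<in> bits n. f r = f a}"
    proof (rule inj_onI)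
      fix r r' assume "r \<in> {r \<in> bits n. f r = f a}" "r' \<in> {r \<in> bits n. f r = f a}"
        and "bxor r t = bxor r' t"
      then have "bxor (bxor r t) t = bxor (bxor r' t) t" and "length r = n" "length r' = n" "length t = n"
        using t by (simp_all add: bits_def)
      then show "r = r'"
        by simp
    qed
    have "f (bxor r t) = f b" if r: "r \<in> bits n" and "f r = f a" for r
    proof -
      have "f (bxor r t) = g (f a) t"
        using assms(1)[OF r t] \<open>f r = f a\<close> by simp
      also have "\<dots> = f (bxor a t)"
        using assms(1)[OF a t] by simp
      also have "bxor a t = b"
        using a b by (simp add: t_def bits_def)
      finally show ?thesis .
    qed
    then show "(\<lambda>r. bxor r t) ` {r \<in> bits n. f r = f a} \<subseteq> {r \<in> bits n. f r = f b}"
      using t by (auto intro: bxor_in_bits)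
  qed simp
  show ?thesis
    using le[OF assms(2,3)] le[OF assms(3,2)] by (rule antisym)
qed

theorem mainTheorem18:
  fixes n :: nat and U :: "complex mat" and C :: "nat \<Rightarrow> bool list" and z :: "bool list"
  assumes "clifford n U"
    and "tableau_C n U C"
    and "z \<in> supp0 n U"
  shows "(\<forall>r \<in> bits n. bxor (row_mul n r C) z \<in> supp0 n U)
    \<and> map_pmf (\<lambda>r. bxor (row_mul n r C) z) (pmf_of_set (bits n)) = pmf_of_set (supp0 n U)"
proof -
  let ?f = "\<lambda>r. bxor (row_mul n r C) z"
  have C: "\<forall>i<n. C i \<in> bits n"
    using tableau_C_conj_shifts_by(1)[OF assms(2)] by blast
  have into: "\<forall>r \<in> bits n. ?f r \<in> supp0 n U"
    using supp0_translate[OF assms] by blast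
  then have onto: "?f ` bits n = supp0 n U"
    using supp0_subset_translates[OF assms] by blast
  have "?f (bxor r t) = bxor (?f r) (row_mul n t C)" if "r \<in> bits n" "t \<in> bits n" for r t
    using row_mul_bxor[OF C that] row_mul_in_bits[OF C] assms(3)
    by (auto simp: supp0_def bits_def intro!: nth_equalityI)
  then have "map_pmf ?f (pmf_of_set (bits n)) = pmf_of_set (?f ` bits n)"
    by (intro map_pmf_of_set_equal_fibres card_fibres_translation_invariant) auto
  with into onto show ?thesis
    by simp
qed

end
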